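(* Let $N\ge3$, $K(r)\equiv r^{\alpha}$ with $\alpha>-2$, and $p>p_S(\alpha)$. Assume $f$ satisfies (F0) and (F$\infty$). Then there exists $\mu_1>0$ such that for every $\mu\in[0,\mu_1)$, $(E_\mu)$ has a singular slow-decay solution.
   Context: $f:(0,\infty)\to[0,\infty)$ is continuous, not identically zero, and satisfies (F0): $f(r)=O(r^{\nu})$ as $r\to0$ for some $\nu>-2$; (F$\infty$): $f(r)=O(r^{-q})$ as $r\to\infty$ for some $q>N$. For $\mu\ge0$, $(E_\mu)$ is $u''+\frac{N-1}{r}u'+K(r)u^p+\mu f(r)=0$, $u>0$ for $r>0$. A singular solution is $u\in C^2(0,\infty)$ satisfying $(E_\mu)$ pointwise on $(0,\infty)$ with $\lim_{r\to0}u(r)=\infty$. It is slow-decay if $\limsup_{r\to\infty}r^{N-2}u(r)=\infty$. $p_S(\alpha):=\frac{N+2+2\alpha}{N-2}$. *)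

theory Defs
  imports "HOL-Analysis.Analysis" "HOL-Library.Landau_Symbols"
begin

definition p_S :: "nat \<Rightarrow> real \<Rightarrow> real" where
  "p_S N \<alpha> = (real N + 2 + 2 * \<alpha>) / (real N - 2)"

definition admissible_f :: "nat \<Rightarrow> (real \<Rightarrow> real) \<Rightarrow> bool" where
  "admissible_f N f \<longleftrightarrow>
     continuous_on {0<..} f \<and> (\<forall>r>0. f r \<ge> 0) \<and> (\<exists>r>0. f r \<noteq> 0) \<and>
     (\<exists>\<nu>>-2. f \<in> O[at_right 0](\<lambda>r. r powr \<nu>)) \<and>
     (\<exists>q>real N. f \<in> O[at_top](\<lambda>r. r powr (- q)))"

definition singular_solution ::
  "nat \<Rightarrow> real \<Rightarrow> real \<Rightarrow> real \<Rightarrow> (real \<Rightarrow> real) \<Rightarrow> (real \<Rightarrow> real) \<Rightarrow> bool" where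
  "singular_solution N \<alpha> p \<mu> f u \<longleftrightarrow>
     (\<exists>u' u''.
        (\<forall>r>0. (u has_real_derivative u' r) (at r) \<and> (u' has_real_derivative u'' r) (at r)) \<and>
        continuous_on {0<..} u'' \<and>
        (\<forall>r>0. u r > 0 \<and>
           u'' r + (real N - 1) / r * u' r + r powr \<alpha> * (u r) powr p + \<mu> * f r = 0)) \<and>
     filterlim u at_top (at_right 0)"

definition slow_decay :: "nat \<Rightarrow> (real \<Rightarrow> real) \<Rightarrow> bool" where
  "slow_decay N u \<longleftrightarrow> Limsup at_top (\<lambda>r. ereal (r ^ (N - 2) * u r)) = \<infinity>"

end

theory Submission
  imports Defs "HOL-Real_Asymp.Real_Asymp"
begin

(* Substituting u(r) = r^-m v(ln r) with m = (2 + alpha) / (p - 1) turns (E_mu) into the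
   autonomous equation v'' + c v' - k v + v^p + mu g(t) = 0, where c = N - 2 - 2m and
   k = m (N - 2 - m) are positive because p > p_S(alpha), and g(t) = e^((m+2)t) f(e^t) is
   bounded by (F0) and (F_inf). The constant A = k^(1/(p-1)) solves it for mu = 0. Writing
   v = A + w gives w'' + c w' + (p - 1) k w = -mu g - R(w) with R the Taylor remainder of v^p
   at A. Both characteristic roots have negative real part, so integrating from -infinity
   inverts the linear part on bounded functions, and for small mu the resulting fixed point
   problem is a contraction on a small ball. Then v >= A - eps > 0, so u blows up like r^-m
   at the origin while r^(N-2) u(r) grows like r^(N-2-m) with m < N - 2. *)

section \<open>Green operators on the whole line\<close>

lemma exp_integral_atMost:
  fixes a t :: real
  assumes "a > 0"
  shows "(\<lambda>x. exp (a * x)) absolutely_integrable_on {..t}"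
    and "integral {..t} (\<lambda>x. exp (a * x)) = exp (a * t) / a"
proof -
  have int: "((\<lambda>x. exp (- a * x)) has_integral exp (- a * (- t)) / a) {-t..}"
    by (rule has_integral_exp_minus_to_infinity[OF assms])
  have "(\<lambda>x. exp (- a * x)) absolutely_integrable_on {-t..}"
    using int by (intro nonnegative_absolutely_integrable_1) auto
  then have "(\<lambda>x. exp (- a * (- x))) absolutely_integrable_on {..t} \<and>
      integral {..t} (\<lambda>x. exp (- a * (- x))) = exp (- a * (- t)) / a"
    using int by (subst has_absolute_integral_reflect_real[where B = "{-t..}"])
      (auto simp: image_def integral_unique intro: exI[where x = "- _"])
  then show "(\<lambda>x. exp (a * x)) absolutely_integrable_on {..t}"
    and "integral {..t} (\<lambda>x. exp (a * x)) = exp (a * t) / a"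
    by simp_all
qed

definition green1 :: "complex \<Rightarrow> (real \<Rightarrow> complex) \<Rightarrow> real \<Rightarrow> complex" where
  "green1 l h t = exp (l * of_real t) * integral {..t} (\<lambda>s. exp (- (l * of_real s)) * h s)"

context
  fixes l :: complex and h :: "real \<Rightarrow> complex" and B :: real
  assumes Re_neg: "Re l < 0" and cont: "continuous_on UNIV h" and bound: "\<And>s. norm (h s) \<le> B"
begin

lemma norm_green1_integrand_le: "norm (exp (- (l * of_real s)) * h s) \<le> B * exp (- Re l * s)"
proof -
  have "norm (exp (- (l * of_real s)) * h s) = exp (- Re l * s) * norm (h s)"
    by (simp add: norm_mult norm_exp_eq_Re)
  also have "\<dots> \<le> exp (- Re l * s) * B"
    using bound by (intro mult_left_mono) auto
  finally show ?thesis
    by (simp add: mult.commute)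
qed

lemma green1_dominant_integrable: "(\<lambda>s. B * exp (- Re l * s)) integrable_on {..t}"
  using set_lebesgue_integral_eq_integral(1)[OF exp_integral_atMost(1)[of "- Re l" t]] Re_neg
  by (intro integrable_on_mult_right) auto

lemma green1_integrand_absolutely_integrable:
  "(\<lambda>s. exp (- (l * of_real s)) * h s) absolutely_integrable_on {..t}"
  by (rule measurable_bounded_by_integrable_imp_absolutely_integrable[OF _ _
        green1_dominant_integrable norm_green1_integrand_le])
    (auto intro!: continuous_imp_measurable_on_sets_lebesgue continuous_intros
      continuous_on_subset[OF cont])

lemma norm_green1_le: "norm (green1 l h t) \<le> B / - Re l"
proof -
  have "norm (integral {..t} (\<lambda>s. exp (- (l * of_real s)) * h s))
      \<le> integral {..t} (\<lambda>s. B * exp (- Re l * s))"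
    using green1_integrand_absolutely_integrable green1_dominant_integrable
    by (intro integral_norm_bound_integral norm_green1_integrand_le)
      (auto simp: absolutely_integrable_on_def)
  also have "\<dots> = B * (exp (- Re l * t) / - Re l)"
    using exp_integral_atMost(2)[of "- Re l" t] Re_neg by simp
  finally have integral_le: "norm (integral {..t} (\<lambda>s. exp (- (l * of_real s)) * h s))
      \<le> B * (exp (- Re l * t) / - Re l)" .
  have "norm (green1 l h t)
      = exp (Re l * t) * norm (integral {..t} (\<lambda>s. exp (- (l * of_real s)) * h s))"
    by (simp add: green1_def norm_mult norm_exp_eq_Re)
  also have "\<dots> \<le> exp (Re l * t) * (B * (exp (- Re l * t) / - Re l))"
    using integral_le by (intro mult_left_mono) auto
  also have "\<dots> = B / - Re l"
    by (simp add: exp_minus field_simps)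
  finally show ?thesis .
qed

lemma green1_has_vector_derivative:
  "(green1 l h has_vector_derivative l * green1 l h t + h t) (at t)"
proof -
  define \<phi> where "\<phi> = (\<lambda>s. exp (- (l * of_real s)) * h s)"
  define H where "H = (\<lambda>x. integral {..x} \<phi>)"
  have \<phi>_cont: "continuous_on S \<phi>" for S
    unfolding \<phi>_def by (intro continuous_intros continuous_on_subset[OF cont]) auto
  have H_split: "H x = H (t - 1) + integral {t - 1..x} \<phi>" if "x \<in> {t - 1<..<t + 1}" for x
  proof -
    have "(\<phi> has_integral (H (t - 1) + integral {t - 1..x} \<phi>)) ({..t - 1} \<union> {t - 1..x})"
      using green1_integrand_absolutely_integrable integrable_continuous_real[OF \<phi>_cont]
      unfolding H_def \<phi>_def absolutely_integrable_on_def
      by (intro has_integral_Un) (auto intro: integrable_integral negligible_subset[of "{t - 1}"])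
    moreover have "{..t - 1} \<union> {t - 1..x} = {..x}"
      using that by auto
    ultimately show ?thesis
      unfolding H_def by (simp add: integral_unique)
  qed
  have "t \<in> interior {t - 1..t + 1}"
    by simp
  from integral_has_vector_derivative[OF \<phi>_cont, of t "t - 1" "t + 1"]
  have "((\<lambda>x. integral {t - 1..x} \<phi>) has_vector_derivative \<phi> t) (at t)"
    unfolding at_within_interior[OF \<open>t \<in> interior {t - 1..t + 1}\<close>] by simp
  then have "((\<lambda>x. H (t - 1) + integral {t - 1..x} \<phi>) has_vector_derivative \<phi> t) (at t)"
    by (auto intro!: derivative_eq_intros)
  then have H_deriv: "(H has_vector_derivative \<phi> t) (at t)"
    by (rule has_vector_derivative_transform_within_open[of _ _ _ "{t - 1<..<t + 1}"])
      (simp_all add: H_split)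
  have "((\<lambda>z. exp (l * z)) has_field_derivative l * exp (l * of_real t)) (at (of_real t))"
    by (auto intro!: derivative_eq_intros)
  from has_vector_derivative_real_field[OF this]
  have "((\<lambda>x. exp (l * of_real x)) has_vector_derivative l * exp (l * of_real t)) (at t)"
    by simp
  from has_vector_derivative_mult[OF this H_deriv]
  have "((\<lambda>x. exp (l * of_real x) * H x) has_vector_derivative
      exp (l * of_real t) * \<phi> t + l * exp (l * of_real t) * H t) (at t)" .
  moreover have "green1 l h = (\<lambda>x. exp (l * of_real x) * H x)"
    by (auto simp: green1_def H_def \<phi>_def)
  moreover have "exp (l * of_real t) * \<phi> t = h t"
    by (simp add: \<phi>_def mult.assoc[symmetric] exp_minus)
  ultimately show ?thesis
    by (simp add: algebra_simps)
qed

lemma continuous_on_green1: "continuous_on UNIV (green1 l h)"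
  using green1_has_vector_derivative
  by (intro continuous_on_vector_derivative) (auto intro: has_vector_derivative_at_within)

end

lemma green1_diff:
  assumes "Re l < 0"
    and "continuous_on UNIV h1" "\<And>s. norm (h1 s) \<le> B1"
    and "continuous_on UNIV h2" "\<And>s. norm (h2 s) \<le> B2"
  shows "green1 l h1 t - green1 l h2 t = green1 l (\<lambda>s. h1 s - h2 s) t"
proof -
  have "(\<lambda>s. exp (- (l * of_real s)) * h1 s) integrable_on {..t}"
    and "(\<lambda>s. exp (- (l * of_real s)) * h2 s) integrable_on {..t}"
    using green1_integrand_absolutely_integrable[OF assms(1-3)]
      green1_integrand_absolutely_integrable[OF assms(1,4,5)]
    by (simp_all add: absolutely_integrable_on_def)
  then show ?thesis
    unfolding green1_def by (simp add: right_diff_distrib integral_diff)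
qed

definition green2 :: "complex \<Rightarrow> complex \<Rightarrow> (real \<Rightarrow> real) \<Rightarrow> real \<Rightarrow> real" where
  "green2 l1 l2 h t = Re (green1 l2 (green1 l1 (\<lambda>s. of_real (h s))) t)"

lemma Re_has_real_derivative:
  assumes "(f has_vector_derivative f') (at t)"
  shows "((\<lambda>x. Re (f x)) has_real_derivative Re f') (at t)"
  using bounded_linear.has_vector_derivative[OF bounded_linear_Re assms]
  by (simp add: has_real_derivative_iff_has_vector_derivative)

context
  fixes l1 l2 :: complex and h :: "real \<Rightarrow> real" and B :: real
  assumes Re_neg: "Re l1 < 0" "Re l2 < 0"
    and cont: "continuous_on UNIV h" and bound: "\<And>s. \<bar>h s\<bar> \<le> B"
begin

lemma
  shows continuous_on_green1_of_real: "continuous_on UNIV (green1 l1 (\<lambda>s. of_real (h s)))"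
    and norm_green1_of_real_le: "norm (green1 l1 (\<lambda>s. of_real (h s)) t) \<le> B / - Re l1"
    and green1_of_real_has_vector_derivative: "(green1 l1 (\<lambda>s. of_real (h s)) has_vector_derivative
          l1 * green1 l1 (\<lambda>s. of_real (h s)) t + of_real (h t)) (at t)"
proof -
  have of_real_h: "continuous_on UNIV (\<lambda>s. complex_of_real (h s))"
    "\<And>s. norm (complex_of_real (h s)) \<le> B"
    using cont bound by (auto intro!: continuous_intros)
  show "continuous_on UNIV (green1 l1 (\<lambda>s. of_real (h s)))"
    by (rule continuous_on_green1[OF Re_neg(1) of_real_h])
  show "norm (green1 l1 (\<lambda>s. of_real (h s)) t) \<le> B / - Re l1"
    by (rule norm_green1_le[OF Re_neg(1) of_real_h])
  show "(green1 l1 (\<lambda>s. of_real (h s)) has_vector_derivative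
      l1 * green1 l1 (\<lambda>s. of_real (h s)) t + of_real (h t)) (at t)"
    by (rule green1_has_vector_derivative[OF Re_neg(1) of_real_h])
qed

lemma abs_green2_le: "\<bar>green2 l1 l2 h t\<bar> \<le> B / (Re l1 * Re l2)"
proof -
  have "\<bar>green2 l1 l2 h t\<bar> \<le> norm (green1 l2 (green1 l1 (\<lambda>s. of_real (h s))) t)"
    by (simp add: green2_def abs_Re_le_cmod)
  also have "\<dots> \<le> (B / - Re l1) / - Re l2"
    by (rule norm_green1_le[OF Re_neg(2) continuous_on_green1_of_real norm_green1_of_real_le])
  finally show ?thesis
    by (simp add: field_simps)
qed

lemma continuous_on_green2: "continuous_on UNIV (green2 l1 l2 h)"
  unfolding green2_def
  by (intro continuous_intros continuous_on_green1[OF Re_neg(2) continuous_on_green1_of_real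
        norm_green1_of_real_le])

text \<open>With \<open>l1 + l2 = -c\<close> and \<open>l1 * l2 = \<gamma>\<close> the operator \<open>(d/dt - l2)(d/dt - l1)\<close> is
  \<open>d\<^sup>2/dt\<^sup>2 + c d/dt + \<gamma>\<close>, so \<open>green2\<close> inverts it.\<close>
lemma green2_ode:
  assumes sum: "l1 + l2 = - of_real c" and prod: "l1 * l2 = of_real \<gamma>"
  shows "\<exists>w' w''. continuous_on UNIV w'' \<and>
    (\<forall>t. (green2 l1 l2 h has_real_derivative w' t) (at t) \<and> (w' has_real_derivative w'' t) (at t) \<and>
         w'' t + c * w' t + \<gamma> * green2 l1 l2 h t = h t)"
proof -
  define z1 where "z1 = green1 l1 (\<lambda>s. of_real (h s))"
  define z2 where "z2 = green1 l2 z1"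
  have z1: "continuous_on UNIV z1" "(z1 has_vector_derivative l1 * z1 t + of_real (h t)) (at t)"
    for t unfolding z1_def
    by (simp_all add: continuous_on_green1_of_real green1_of_real_has_vector_derivative)
  have z2: "continuous_on UNIV z2" "(z2 has_vector_derivative l2 * z2 t + z1 t) (at t)" for t
    unfolding z2_def z1_def
    using continuous_on_green1[OF Re_neg(2) continuous_on_green1_of_real norm_green1_of_real_le]
      green1_has_vector_derivative[OF Re_neg(2) continuous_on_green1_of_real norm_green1_of_real_le]
    by simp_all
  define w' where "w' = (\<lambda>t. Re (l2 * z2 t + z1 t))"
  define w'' where "w'' = (\<lambda>t. Re (l2 * (l2 * z2 t + z1 t) + (l1 * z1 t + of_real (h t))))"
  have green2_eq: "green2 l1 l2 h = (\<lambda>t. Re (z2 t))"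
    by (simp add: green2_def z2_def z1_def fun_eq_iff)
  have "(green2 l1 l2 h has_real_derivative w' t) (at t)" for t
    unfolding green2_eq w'_def by (rule Re_has_real_derivative[OF z2(2)])
  moreover have "(w' has_real_derivative w'' t) (at t)" for t
    unfolding w'_def w''_def by (rule Re_has_real_derivative) (intro derivative_intros z1 z2)
  moreover have "continuous_on UNIV w''"
    unfolding w''_def by (intro continuous_intros z1 z2 cont)
  moreover have "w'' t + c * w' t + \<gamma> * green2 l1 l2 h t = h t" for t
  proof -
    have "w'' t + c * w' t + \<gamma> * green2 l1 l2 h t
      = Re (l2 * (l2 * z2 t + z1 t) + (l1 * z1 t + of_real (h t)) + of_real c * (l2 * z2 t + z1 t)
          + of_real \<gamma> * z2 t)"
      by (simp add: w'_def w''_def green2_eq)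
    also have "l2 * (l2 * z2 t + z1 t) + (l1 * z1 t + of_real (h t))
        + of_real c * (l2 * z2 t + z1 t) + of_real \<gamma> * z2 t
      = of_real (h t) + (l1 + l2 + of_real c) * (z1 t + l2 * z2 t)"
      unfolding prod[symmetric] by (simp add: algebra_simps)
    also have "\<dots> = of_real (h t)"
      using sum by simp
    finally show ?thesis
      by simp
  qed
  ultimately show ?thesis
    by blast
qed

end

lemma green2_diff:
  assumes "Re l1 < 0" "Re l2 < 0"
    and "continuous_on UNIV h1" "\<And>s. \<bar>h1 s\<bar> \<le> B1"
    and "continuous_on UNIV h2" "\<And>s. \<bar>h2 s\<bar> \<le> B2"
  shows "green2 l1 l2 h1 t - green2 l1 l2 h2 t = green2 l1 l2 (\<lambda>s. h1 s - h2 s) t"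
proof -
  note inner1 = continuous_on_green1_of_real[OF assms(1-4)] norm_green1_of_real_le[OF assms(1-4)]
  note inner2 =
    continuous_on_green1_of_real[OF assms(1,2,5,6)] norm_green1_of_real_le[OF assms(1,2,5,6)]
  have "green1 l1 (\<lambda>s. of_real (h1 s)) s - green1 l1 (\<lambda>s. of_real (h2 s)) s
      = green1 l1 (\<lambda>s. of_real (h1 s - h2 s)) s" for s
    using green1_diff[OF assms(1), of "\<lambda>s. of_real (h1 s)" B1 "\<lambda>s. of_real (h2 s)" B2] assms
    by (auto intro!: continuous_intros)
  then have "green1 l2 (green1 l1 (\<lambda>s. of_real (h1 s))) t
      - green1 l2 (green1 l1 (\<lambda>s. of_real (h2 s))) t
      = green1 l2 (green1 l1 (\<lambda>s. of_real (h1 s - h2 s))) t"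
    using green1_diff[OF assms(2) inner1 inner2] by simp
  then show ?thesis
    unfolding green2_def by (metis minus_complex.sel(1))
qed

section \<open>Bounded solutions of the perturbed damped oscillator\<close>

lemma lipschitz_perturbation_bounded:
  fixes g R w :: "real \<Rightarrow> real"
  assumes R: "L-lipschitz_on {-\<epsilon>..\<epsilon>} R" "R 0 = 0"
    and g: "continuous_on UNIV g" "\<And>s. \<bar>g s\<bar> \<le> G"
    and w: "continuous_on UNIV w" "\<And>s. \<bar>w s\<bar> \<le> \<epsilon>"
  shows "continuous_on UNIV (\<lambda>s. g s - R (w s))" and "\<bar>g s - R (w s)\<bar> \<le> G + L * \<epsilon>"
proof -
  have w_in: "w s \<in> {-\<epsilon>..\<epsilon>}" for s
    using w(2)[of s] by (simp add: abs_le_iff)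
  then have "continuous_on UNIV (\<lambda>s. R (w s))"
    by (intro continuous_on_compose2[OF lipschitz_on_continuous_on[OF R(1)] w(1)]) auto
  then show "continuous_on UNIV (\<lambda>s. g s - R (w s))"
    using g(1) by (intro continuous_intros)
  have "\<bar>R (w s) - R 0\<bar> \<le> L * \<bar>w s - 0\<bar>"
    using lipschitz_onD[OF R(1) w_in, of 0] w_in[of s] by (simp add: dist_real_def)
  also have "\<dots> \<le> L * \<epsilon>"
    using lipschitz_on_nonneg[OF R(1)] w(2)[of s] by (intro mult_left_mono) auto
  finally show "\<bar>g s - R (w s)\<bar> \<le> G + L * \<epsilon>"
    using abs_triangle_ineq4[of "g s" "R (w s)"] g(2)[of s] R(2) by simp
qed

lemma fixpoint_sup_contraction:
  fixes \<Phi> :: "(real \<Rightarrow> real) \<Rightarrow> real \<Rightarrow> real"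
  assumes "\<epsilon> \<ge> 0"
    and maps_ball: "\<And>w. continuous_on UNIV w \<Longrightarrow> (\<And>t. \<bar>w t\<bar> \<le> \<epsilon>) \<Longrightarrow>
      continuous_on UNIV (\<Phi> w) \<and> (\<forall>t. \<bar>\<Phi> w t\<bar> \<le> \<epsilon>)"
    and contraction: "\<And>v w d t. continuous_on UNIV v \<Longrightarrow> (\<And>t. \<bar>v t\<bar> \<le> \<epsilon>) \<Longrightarrow>
      continuous_on UNIV w \<Longrightarrow> (\<And>t. \<bar>w t\<bar> \<le> \<epsilon>) \<Longrightarrow> (\<And>s. \<bar>v s - w s\<bar> \<le> d) \<Longrightarrow>
      \<bar>\<Phi> v t - \<Phi> w t\<bar> \<le> d / 2"
  shows "\<exists>w. continuous_on UNIV w \<and> (\<forall>t. \<bar>w t\<bar> \<le> \<epsilon>) \<and> (\<forall>t. w t = \<Phi> w t)"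
proof -
  define Ball where "Ball = cball (0 :: real \<Rightarrow>\<^sub>C real) \<epsilon>"
  have in_Ball: "\<bar>apply_bcontfun w t\<bar> \<le> \<epsilon>" if "w \<in> Ball" for w t
    using norm_bounded[of w t] that by (simp add: Ball_def dist_norm)
  have \<Phi>_Ball: "continuous_on UNIV (\<Phi> (apply_bcontfun w)) \<and>
      (\<forall>t. \<bar>\<Phi> (apply_bcontfun w) t\<bar> \<le> \<epsilon>)" if "w \<in> Ball" for w
    using maps_ball[OF _ in_Ball[OF that]] by simp
  then have \<Phi>_bcontfun: "\<Phi> (apply_bcontfun w) \<in> bcontfun" if "w \<in> Ball" for w
    using that by (intro bcontfun_normI) auto
  define T where "T = (\<lambda>w. Bcontfun (\<Phi> (apply_bcontfun w)))"
  have T_apply: "apply_bcontfun (T w) t = \<Phi> (apply_bcontfun w) t" if "w \<in> Ball" for w t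
    by (simp add: T_def Bcontfun_inverse[OF \<Phi>_bcontfun[OF that]])
  have T_Ball: "T ` Ball \<subseteq> Ball"
  proof
    fix v assume "v \<in> T ` Ball"
    then obtain w where w: "w \<in> Ball" "v = T w"
      by auto
    have "norm v \<le> \<epsilon>"
      using \<Phi>_Ball[OF w(1)] T_apply[OF w(1)] unfolding w(2) by (intro norm_bound) simp
    then show "v \<in> Ball"
      by (simp add: Ball_def dist_norm)
  qed
  have T_contraction: "dist (T v) (T w) \<le> 1 / 2 * dist v w" if "v \<in> Ball" "w \<in> Ball" for v w
  proof (rule dist_bound)
    fix t
    have "\<bar>\<Phi> (apply_bcontfun v) t - \<Phi> (apply_bcontfun w) t\<bar> \<le> dist v w / 2"
      using dist_bounded[of v _ w] in_Ball that
      by (intro contraction) (auto simp: dist_real_def)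
    then show "dist (apply_bcontfun (T v) t) (apply_bcontfun (T w) t) \<le> 1 / 2 * dist v w"
      by (simp add: T_apply that dist_real_def)
  qed
  have "\<exists>!w\<in>Ball. T w = w"
    using assms(1)
    by (intro Banach_fix[OF _ _ _ _ T_Ball T_contraction]) (auto simp: Ball_def complete_eq_closed)
  then obtain w where w: "w \<in> Ball" "T w = w"
    by blast
  have "apply_bcontfun w t = \<Phi> (apply_bcontfun w) t" for t
    using T_apply[OF w(1), of t] unfolding w(2) .
  moreover have "continuous_on UNIV (apply_bcontfun w)"
    by simp
  ultimately show ?thesis
    using in_Ball[OF w(1)] by blast
qed

lemma fixpoint_bounded_linear_perturbed:
  fixes S :: "(real \<Rightarrow> real) \<Rightarrow> real \<Rightarrow> real" and g R :: "real \<Rightarrow> real"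
  assumes S_cont: "\<And>h B. continuous_on UNIV h \<Longrightarrow> (\<And>s. \<bar>h s\<bar> \<le> B) \<Longrightarrow> continuous_on UNIV (S h)"
    and S_bound: "\<And>h B t. continuous_on UNIV h \<Longrightarrow> (\<And>s. \<bar>h s\<bar> \<le> B) \<Longrightarrow> \<bar>S h t\<bar> \<le> M * B"
    and S_diff: "\<And>h1 h2 B1 B2 t. continuous_on UNIV h1 \<Longrightarrow> (\<And>s. \<bar>h1 s\<bar> \<le> B1) \<Longrightarrow>
        continuous_on UNIV h2 \<Longrightarrow> (\<And>s. \<bar>h2 s\<bar> \<le> B2) \<Longrightarrow>
        S h1 t - S h2 t = S (\<lambda>s. h1 s - h2 s) t"
    and eps: "\<epsilon> > 0" and R: "L-lipschitz_on {-\<epsilon>..\<epsilon>} R" "R 0 = 0" and LM: "L * M \<le> 1 / 2"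
    and g: "continuous_on UNIV g" "\<And>s. \<bar>g s\<bar> \<le> G" and GM: "M * G \<le> \<epsilon> / 2"
  shows "\<exists>w. continuous_on UNIV w \<and> (\<forall>t. \<bar>w t\<bar> \<le> \<epsilon>) \<and> (\<forall>t. w t = S (\<lambda>s. g s - R (w s)) t)"
proof (rule fixpoint_sup_contraction)
  note forcing = lipschitz_perturbation_bounded[OF R g]
  show "continuous_on UNIV (S (\<lambda>s. g s - R (w s))) \<and> (\<forall>t. \<bar>S (\<lambda>s. g s - R (w s)) t\<bar> \<le> \<epsilon>)"
    if "continuous_on UNIV w" "\<And>t. \<bar>w t\<bar> \<le> \<epsilon>" for w
  proof (intro conjI allI)
    show "continuous_on UNIV (S (\<lambda>s. g s - R (w s)))"
      by (rule S_cont[OF forcing[OF that]])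
    fix t
    have "\<bar>S (\<lambda>s. g s - R (w s)) t\<bar> \<le> M * (G + L * \<epsilon>)"
      by (rule S_bound[OF forcing[OF that]])
    also have "\<dots> = M * G + (L * M) * \<epsilon>"
      by (simp add: algebra_simps)
    also have "\<dots> \<le> \<epsilon>"
      using GM mult_right_mono[OF LM, of \<epsilon>] eps by linarith
    finally show "\<bar>S (\<lambda>s. g s - R (w s)) t\<bar> \<le> \<epsilon>" .
  qed
  show "\<bar>S (\<lambda>s. g s - R (v s)) t - S (\<lambda>s. g s - R (w s)) t\<bar> \<le> d / 2"
    if v: "continuous_on UNIV v" "\<And>t. \<bar>v t\<bar> \<le> \<epsilon>" and w: "continuous_on UNIV w" "\<And>t. \<bar>w t\<bar> \<le> \<epsilon>"
      and d: "\<And>s. \<bar>v s - w s\<bar> \<le> d" for v w d t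
  proof -
    have diff_le: "\<bar>(g s - R (v s)) - (g s - R (w s))\<bar> \<le> L * d" for s
    proof -
      have "\<bar>R (v s) - R (w s)\<bar> \<le> L * \<bar>v s - w s\<bar>"
        using lipschitz_onD[OF R(1), of "v s" "w s"] v(2)[of s] w(2)[of s]
        by (simp add: dist_real_def abs_le_iff)
      also have "\<dots> \<le> L * d"
        using d[of s] lipschitz_on_nonneg[OF R(1)] by (rule mult_left_mono)
      finally show ?thesis
        by simp
    qed
    have "\<bar>S (\<lambda>s. g s - R (v s)) t - S (\<lambda>s. g s - R (w s)) t\<bar>
        = \<bar>S (\<lambda>s. (g s - R (v s)) - (g s - R (w s))) t\<bar>"
      by (simp only: S_diff[OF forcing[OF v] forcing[OF w]])
    also have "\<dots> \<le> M * (L * d)"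
      by (rule S_bound[OF continuous_on_diff[OF forcing(1)[OF v] forcing(1)[OF w]] diff_le])
    also have "\<dots> \<le> d / 2"
      using mult_right_mono[OF LM, of d] d[of 0] by (simp add: algebra_simps)
    finally show ?thesis .
  qed
qed (use eps in simp)

lemma quadratic_roots_neg_Re:
  fixes c \<gamma> :: real
  assumes c: "c > 0" and \<gamma>: "\<gamma> > 0"
  obtains l1 l2 :: complex
  where "Re l1 < 0" "Re l2 < 0" "l1 + l2 = - of_real c" "l1 * l2 = of_real \<gamma>"
proof (cases "c\<^sup>2 \<ge> 4 * \<gamma>")
  case True
  define d where "d = sqrt (c\<^sup>2 - 4 * \<gamma>)"
  have d: "d \<ge> 0" "d\<^sup>2 = c\<^sup>2 - 4 * \<gamma>"
    using True by (simp_all add: d_def)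
  then have "d < c"
    using c \<gamma> by (smt (verit) power_mono)
  moreover have "((- c + d) / 2) * ((- c - d) / 2) = \<gamma>"
    using d by (simp add: field_simps power2_eq_square)
  then have "complex_of_real ((- c + d) / 2) * complex_of_real ((- c - d) / 2) = of_real \<gamma>"
    by (metis of_real_mult)
  ultimately show ?thesis
    using c d by (intro that[of "of_real ((- c + d) / 2)" "of_real ((- c - d) / 2)"])
      (simp_all add: field_simps)
next
  case False
  define d where "d = sqrt (4 * \<gamma> - c\<^sup>2)"
  have "d\<^sup>2 = 4 * \<gamma> - c\<^sup>2"
    using False by (simp add: d_def)
  then show ?thesis
    using c by (intro that[of "Complex (- c / 2) (d / 2)" "Complex (- c / 2) (- d / 2)"])
      (simp_all add: complex_eq_iff field_simps power2_eq_square)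
qed

lemma green2_fixpoint:
  fixes g R :: "real \<Rightarrow> real"
  assumes l: "Re l1 < 0" "Re l2 < 0"
    and eps: "\<epsilon> > 0" and R: "L-lipschitz_on {-\<epsilon>..\<epsilon>} R" "R 0 = 0" and L: "2 * L \<le> Re l1 * Re l2"
    and g: "continuous_on UNIV g" "\<And>s. \<bar>g s\<bar> \<le> L * \<epsilon>"
  shows "\<exists>w. continuous_on UNIV w \<and> (\<forall>t. \<bar>w t\<bar> \<le> \<epsilon>) \<and>
    (\<forall>t. w t = green2 l1 l2 (\<lambda>s. g s - R (w s)) t)"
proof -
  define M where "M = 1 / (Re l1 * Re l2)"
  have "Re l1 * Re l2 > 0"
    using l by (simp add: mult_neg_neg)
  then have LM: "L * M \<le> 1 / 2" and GM: "M * (L * \<epsilon>) \<le> \<epsilon> / 2"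
    using L eps by (simp_all add: M_def field_simps)
  show ?thesis
  proof (rule fixpoint_bounded_linear_perturbed[where S = "green2 l1 l2", OF _ _ _ eps R LM g GM])
    fix h :: "real \<Rightarrow> real" and B t :: real
    assume h: "continuous_on UNIV h" "\<And>s. \<bar>h s\<bar> \<le> B"
    show "continuous_on UNIV (green2 l1 l2 h)"
      by (rule continuous_on_green2[OF l h])
    show "\<bar>green2 l1 l2 h t\<bar> \<le> M * B"
      using abs_green2_le[OF l h] by (simp add: M_def)
  next
    fix h1 h2 :: "real \<Rightarrow> real" and B1 B2 t :: real
    assume "continuous_on UNIV h1" "\<And>s. \<bar>h1 s\<bar> \<le> B1" "continuous_on UNIV h2" "\<And>s. \<bar>h2 s\<bar> \<le> B2"
    then show "green2 l1 l2 h1 t - green2 l1 l2 h2 t = green2 l1 l2 (\<lambda>s. h1 s - h2 s) t"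
      by (rule green2_diff[OF l])
  qed
qed

lemma damped_oscillator_perturbed_solution:
  fixes c \<gamma> :: real
  assumes "c > 0" "\<gamma> > 0"
  obtains L where "L > 0" and
    "\<And>\<epsilon> R g. \<epsilon> > 0 \<Longrightarrow> L-lipschitz_on {-\<epsilon>..\<epsilon>} R \<Longrightarrow> R 0 = 0 \<Longrightarrow>
      continuous_on UNIV g \<Longrightarrow> (\<And>s. \<bar>g s\<bar> \<le> L * \<epsilon>) \<Longrightarrow>
      \<exists>w w' w''. continuous_on UNIV w'' \<and>
        (\<forall>t. \<bar>w t\<bar> \<le> \<epsilon> \<and> (w has_real_derivative w' t) (at t) \<and>
             (w' has_real_derivative w'' t) (at t) \<and>
             w'' t + c * w' t + \<gamma> * w t = g t - R (w t))"
proof -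
  obtain l1 l2 where l: "Re l1 < 0" "Re l2 < 0" "l1 + l2 = - of_real c" "l1 * l2 = of_real \<gamma>"
    using quadratic_roots_neg_Re assms by blast
  show ?thesis
  proof (rule that)
    show "Re l1 * Re l2 / 2 > 0"
      using l by (simp add: mult_neg_neg)
    fix \<epsilon> :: real and R g :: "real \<Rightarrow> real"
    assume \<epsilon>: "\<epsilon> > 0" and R: "(Re l1 * Re l2 / 2)-lipschitz_on {-\<epsilon>..\<epsilon>} R" "R 0 = 0"
      and g: "continuous_on UNIV g" "\<And>s. \<bar>g s\<bar> \<le> Re l1 * Re l2 / 2 * \<epsilon>"
    have "2 * (Re l1 * Re l2 / 2) \<le> Re l1 * Re l2"
      by simp
    from green2_fixpoint[OF l(1,2) \<epsilon> R this g]
    obtain w where w: "continuous_on UNIV w" "\<And>t. \<bar>w t\<bar> \<le> \<epsilon>"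
      and w_fix: "\<And>t. w t = green2 l1 l2 (\<lambda>s. g s - R (w s)) t"
      by blast
    note forcing = lipschitz_perturbation_bounded[OF R g w]
    have w_eq: "green2 l1 l2 (\<lambda>s. g s - R (w s)) = w"
      by (rule ext) (simp only: w_fix[symmetric])
    obtain w' w'' where "continuous_on UNIV w''"
      and "\<And>t. (w has_real_derivative w' t) (at t)" "\<And>t. (w' has_real_derivative w'' t) (at t)"
      and "\<And>t. w'' t + c * w' t + \<gamma> * w t = g t - R (w t)"
      using green2_ode[OF l(1,2) forcing l(3,4)] unfolding w_eq by blast
    with w(2) show "\<exists>w w' w''. continuous_on UNIV w'' \<and>
        (\<forall>t. \<bar>w t\<bar> \<le> \<epsilon> \<and> (w has_real_derivative w' t) (at t) \<and>
             (w' has_real_derivative w'' t) (at t) \<and>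
             w'' t + c * w' t + \<gamma> * w t = g t - R (w t))"
      by blast
  qed
qed

section \<open>The profile equation\<close>

definition profile_solution ::
  "real \<Rightarrow> real \<Rightarrow> real \<Rightarrow> (real \<Rightarrow> real) \<Rightarrow> (real \<Rightarrow> real) \<Rightarrow> bool" where
  "profile_solution c k p g v \<longleftrightarrow> (\<exists>v' v''. continuous_on UNIV v'' \<and>
     (\<forall>t. (v has_real_derivative v' t) (at t) \<and> (v' has_real_derivative v'' t) (at t) \<and>
          v'' t + c * v' t - k * v t + v t powr p + g t = 0))"

lemma lipschitz_on_powr_remainder:
  fixes A p L :: real
  assumes A: "A > 0" and L: "L > 0"
  obtains \<epsilon> where "\<epsilon> > 0" "\<epsilon> < A"
    and "L-lipschitz_on {-\<epsilon>..\<epsilon>} (\<lambda>x. (A + x) powr p - A powr p - p * A powr (p - 1) * x)"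
proof -
  define R' where "R' = (\<lambda>x. p * (A + x) powr (p - 1) - p * A powr (p - 1))"
  have "isCont R' 0"
    unfolding R'_def using A by (intro continuous_intros) auto
  moreover have "R' 0 = 0"
    by (simp add: R'_def)
  ultimately obtain \<delta> where \<delta>: "\<delta> > 0" "\<And>x. \<bar>x\<bar> < \<delta> \<Longrightarrow> \<bar>R' x\<bar> < L"
    using L unfolding continuous_at_eps_delta by (force simp: dist_real_def)
  define \<epsilon> where "\<epsilon> = min (\<delta> / 2) (A / 2)"
  have \<epsilon>: "\<epsilon> > 0" "\<epsilon> < A" "\<epsilon> < \<delta>"
    using \<delta> A by (auto simp: \<epsilon>_def)
  have "L-lipschitz_on {-\<epsilon>..\<epsilon>} (\<lambda>x. (A + x) powr p - A powr p - p * A powr (p - 1) * x)"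
  proof (rule lipschitz_onI)
    fix x y assume xy: "x \<in> {-\<epsilon>..\<epsilon>}" "y \<in> {-\<epsilon>..\<epsilon>}"
    have deriv: "((\<lambda>x. (A + x) powr p - A powr p - p * A powr (p - 1) * x) has_field_derivative R' z)
        (at z within {-\<epsilon>..\<epsilon>})" if "z \<in> {-\<epsilon>..\<epsilon>}" for z
      using that \<epsilon> by (auto simp: R'_def intro!: derivative_eq_intros)
    have bound: "norm (R' z) \<le> L" if "z \<in> {-\<epsilon>..\<epsilon>}" for z
    proof -
      have "\<bar>z\<bar> < \<delta>"
        using that \<epsilon> by auto
      then show ?thesis
        using \<delta>(2) by fastforce
    qed
    show "dist ((A + x) powr p - A powr p - p * A powr (p - 1) * x)
        ((A + y) powr p - A powr p - p * A powr (p - 1) * y) \<le> L * dist x y"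
      using field_differentiable_bound[OF convex_real_interval(5) deriv bound xy]
      by (simp add: dist_norm)
  qed (use L in simp)
  with \<epsilon> that show ?thesis
    by blast
qed

lemma profile_solution_of_perturbation:
  fixes A k p c :: real and g w w' w'' :: "real \<Rightarrow> real"
  assumes A: "A > 0" "A powr (p - 1) = k"
    and w: "continuous_on UNIV w''" "\<And>t. (w has_real_derivative w' t) (at t)"
      "\<And>t. (w' has_real_derivative w'' t) (at t)"
    and eq: "\<And>t. w'' t + c * w' t + (p - 1) * k * w t
      = - g t - ((A + w t) powr p - A powr p - p * A powr (p - 1) * w t)"
  shows "profile_solution c k p g (\<lambda>t. A + w t)"
  unfolding profile_solution_def
proof (intro exI conjI allI)
  have "A powr p = A * A powr (p - 1)"
    using A(1) powr_add[of A 1 "p - 1"] by simp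
  then show "w'' t + c * w' t - k * (A + w t) + (A + w t) powr p + g t = 0" for t
    using eq[of t] A(2) by (simp add: algebra_simps)
  show "((\<lambda>t. A + w t) has_real_derivative w' t) (at t)" for t
    using w(2) by (auto intro!: derivative_eq_intros)
qed (use w in auto)

lemma profile_equation_positive_solution:
  fixes c k p A :: real and g :: "real \<Rightarrow> real"
  assumes c: "c > 0" and k: "k > 0" and p: "p > 1" and A: "A > 0" "A powr (p - 1) = k"
    and g: "continuous_on UNIV g" "\<And>t. \<bar>g t\<bar> \<le> G"
  obtains \<mu>\<^sub>1 where "\<mu>\<^sub>1 > 0" and "\<And>\<mu>. 0 \<le> \<mu> \<Longrightarrow> \<mu> < \<mu>\<^sub>1 \<Longrightarrow>
    \<exists>v \<delta>. \<delta> > 0 \<and> (\<forall>t. v t \<ge> \<delta>) \<and> profile_solution c k p (\<lambda>t. \<mu> * g t) v"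
proof -
  have "(p - 1) * k > 0"
    using p k by simp
  then obtain L where L: "L > 0" and perturbed: "\<And>\<epsilon> R h. \<epsilon> > 0 \<Longrightarrow> L-lipschitz_on {-\<epsilon>..\<epsilon>} R \<Longrightarrow>
      R 0 = 0 \<Longrightarrow> continuous_on UNIV h \<Longrightarrow> (\<And>s. \<bar>h s\<bar> \<le> L * \<epsilon>) \<Longrightarrow>
      \<exists>w w' w''. continuous_on UNIV w'' \<and>
        (\<forall>t. \<bar>w t\<bar> \<le> \<epsilon> \<and> (w has_real_derivative w' t) (at t) \<and>
             (w' has_real_derivative w'' t) (at t) \<and>
             w'' t + c * w' t + (p - 1) * k * w t = h t - R (w t))"
    using damped_oscillator_perturbed_solution[OF c] by blast
  define R where "R = (\<lambda>x. (A + x) powr p - A powr p - p * A powr (p - 1) * x)"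
  obtain \<epsilon> where \<epsilon>: "\<epsilon> > 0" "\<epsilon> < A" and R_lipschitz: "L-lipschitz_on {-\<epsilon>..\<epsilon>} R"
    using lipschitz_on_powr_remainder[OF A(1) L] unfolding R_def by blast
  have G: "G \<ge> 0"
    using g(2)[of 0] by linarith
  show ?thesis
  proof
    show "L * \<epsilon> / (G + 1) > 0"
      using L \<epsilon> G by simp
    fix \<mu> assume \<mu>: "0 \<le> \<mu>" "\<mu> < L * \<epsilon> / (G + 1)"
    have "\<bar>- (\<mu> * g t)\<bar> \<le> L * \<epsilon>" for t
    proof -
      have "\<bar>- (\<mu> * g t)\<bar> \<le> \<mu> * (G + 1)"
        using \<mu>(1) g(2)[of t] by (simp add: abs_mult mult_left_mono)
      also have "\<dots> \<le> L * \<epsilon>"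
        using \<mu>(2) G by (simp add: pos_less_divide_eq)
      finally show ?thesis .
    qed
    moreover have "continuous_on UNIV (\<lambda>t. - (\<mu> * g t))" "R 0 = 0"
      using g(1) by (auto simp: R_def intro!: continuous_intros)
    ultimately obtain w w' w'' where w: "continuous_on UNIV w''" "\<And>t. \<bar>w t\<bar> \<le> \<epsilon>"
      "\<And>t. (w has_real_derivative w' t) (at t)" "\<And>t. (w' has_real_derivative w'' t) (at t)"
      and w_eq: "\<And>t. w'' t + c * w' t + (p - 1) * k * w t = - (\<mu> * g t) - R (w t)"
      using perturbed[OF \<epsilon>(1) R_lipschitz] by blast
    have "profile_solution c k p (\<lambda>t. \<mu> * g t) (\<lambda>t. A + w t)"
      using w_eq unfolding R_def by (rule profile_solution_of_perturbation[OF A w(1,3,4)])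
    moreover have "A + w t \<ge> A - \<epsilon>" for t
      using w(2)[of t] by linarith
    ultimately show "\<exists>v \<delta>. \<delta> > 0 \<and> (\<forall>t. v t \<ge> \<delta>) \<and> profile_solution c k p (\<lambda>t. \<mu> * g t) v"
      using \<epsilon>(2) by (intro exI[of _ "\<lambda>t. A + w t"] exI[of _ "A - \<epsilon>"]) auto
  qed
qed

section \<open>The Emden--Fowler transformation\<close>

lemma has_real_derivative_powr_mult_comp_ln:
  fixes a r :: real
  assumes r: "r > 0" and z: "(z has_real_derivative z') (at (ln r))"
  shows "((\<lambda>x. x powr a * z (ln x)) has_real_derivative r powr (a - 1) * (z' + a * z (ln r)))
    (at r)"
proof -
  have "((\<lambda>x. z (ln x)) has_real_derivative z' * (1 / r)) (at r)"
    by (rule DERIV_chain2[OF z DERIV_ln_divide[OF r]])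
  then have "((\<lambda>x. x powr a * z (ln x)) has_real_derivative
      a * r powr (a - 1) * z (ln r) + r powr a * (z' * (1 / r))) (at r)"
    using r by (auto intro!: derivative_eq_intros)
  moreover have "a * r powr (a - 1) * z (ln r) + r powr a * (z' * (1 / r))
      = r powr (a - 1) * (z' + a * z (ln r))"
    using r by (simp add: powr_diff field_simps)
  ultimately show ?thesis
    by (rule DERIV_cong)
qed

text \<open>The exponent \<open>- m - 1 - 1\<close> is kept in the form produced by applying
  \<open>has_real_derivative_powr_mult_comp_ln\<close> twice.\<close>
lemma emden_fowler_identity:
  fixes N :: nat and r m \<alpha> p \<mu> V V' V'' F :: real
  assumes r: "r > 0" and V: "V > 0" and m: "m * (p - 1) = 2 + \<alpha>"
  shows "r powr (- m - 1 - 1) * (V'' + - m * V' + (- m - 1) * (V' + - m * V))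
      + (real N - 1) / r * (r powr (- m - 1) * (V' + - m * V))
      + r powr \<alpha> * (r powr (- m) * V) powr p + \<mu> * F
    = r powr (- m - 1 - 1) * (V'' + (real N - 2 - 2 * m) * V' - m * (real N - 2 - m) * V
      + V powr p + \<mu> * (r powr (m + 2) * F))"
proof -
  define P where "P = r powr (- m - 1 - 1)"
  have "r powr (- m - 1) = r powr ((- m - 1 - 1) + 1)"
    by (rule arg_cong[of _ _ "(powr) r"]) simp
  also have "\<dots> = P * r"
    using r by (simp only: P_def powr_add) simp
  finally have first_order: "(real N - 1) / r * (r powr (- m - 1) * (V' + - m * V))
      = P * ((real N - 1) * (V' + - m * V))"
    using r by simp
  have "(r powr (- m) * V) powr p = r powr (- m * p) * V powr p"
    using r V by (simp add: powr_mult powr_powr)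
  moreover have "\<alpha> + - m * p = - m - 1 - 1"
    using m by (simp add: algebra_simps)
  ultimately have power: "r powr \<alpha> * (r powr (- m) * V) powr p = P * V powr p"
    unfolding P_def by (metis powr_add mult.assoc)
  have forcing: "\<mu> * F = P * (\<mu> * (r powr (m + 2) * F))"
    using r by (simp add: P_def flip: powr_add)
  show ?thesis
    unfolding P_def[symmetric] first_order power forcing by (simp add: algebra_simps)
qed

lemma filterlim_at_right_0_of_powr_lower_bound:
  fixes u :: "real \<Rightarrow> real" and m \<delta> :: real
  assumes m: "m > 0" and \<delta>: "\<delta> > 0" and u: "\<And>r. r > 0 \<Longrightarrow> \<delta> * r powr (- m) \<le> u r"
  shows "filterlim u at_top (at_right 0)"
proof (rule filterlim_at_top_mono)
  show "filterlim (\<lambda>r. \<delta> * r powr (- m)) at_top (at_right 0)"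
    using m \<delta> by real_asymp
  show "\<forall>\<^sub>F r in at_right 0. \<delta> * r powr (- m) \<le> u r"
    using u eventually_at_right_less[of 0] by (auto elim: eventually_mono)
qed

lemma slow_decay_of_lower_bound:
  fixes u :: "real \<Rightarrow> real" and m \<delta> :: real
  assumes N: "N \<ge> 2" and m: "m < real N - 2" and \<delta>: "\<delta> > 0"
    and u: "\<And>r. r > 0 \<Longrightarrow> \<delta> * r powr (- m) \<le> u r"
  shows "slow_decay N u"
proof -
  have "filterlim (\<lambda>r. r ^ (N - 2) * u r) at_top at_top"
  proof (rule filterlim_at_top_mono)
    show "filterlim (\<lambda>r. \<delta> * r powr (real N - 2 - m)) at_top at_top"
      using \<delta> m by real_asymp
    show "\<forall>\<^sub>F r in at_top. \<delta> * r powr (real N - 2 - m) \<le> r ^ (N - 2) * u r"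
      unfolding eventually_at_top_linorder
    proof (intro exI allI impI)
      fix r :: real
      assume r: "r \<ge> 1"
      have "\<delta> * r powr (real N - 2 - m) = r powr (real N - 2) * (\<delta> * r powr (- m))"
        by (simp add: powr_diff powr_minus divide_inverse)
      also have "\<dots> \<le> r ^ (N - 2) * u r"
        using u[of r] r N by (simp add: powr_realpow[symmetric] of_nat_diff mult_left_mono)
      finally show "\<delta> * r powr (real N - 2 - m) \<le> r ^ (N - 2) * u r" .
    qed
  qed
  then show ?thesis
    unfolding slow_decay_def by (intro lim_imp_Limsup) (auto simp: tendsto_PInfty_eq_at_top)
qed

lemma emden_fowler_singular_solution:
  fixes N :: nat and \<alpha> p m \<mu> \<delta> :: real and f v :: "real \<Rightarrow> real"
  assumes m: "m > 0" "m * (p - 1) = 2 + \<alpha>" and v_ge: "\<delta> > 0" "\<And>t. v t \<ge> \<delta>"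
    and f: "continuous_on {0<..} f"
    and v: "profile_solution (real N - 2 - 2 * m) (m * (real N - 2 - m)) p
      (\<lambda>t. \<mu> * (exp t powr (m + 2) * f (exp t))) v"
  shows "singular_solution N \<alpha> p \<mu> f (\<lambda>r. r powr (- m) * v (ln r))"
proof -
  obtain v' v'' where v'': "continuous_on UNIV v''"
    and v': "\<And>t. (v has_real_derivative v' t) (at t)"
    and v''_deriv: "\<And>t. (v' has_real_derivative v'' t) (at t)"
    and ode: "\<And>t. v'' t + (real N - 2 - 2 * m) * v' t - m * (real N - 2 - m) * v t + v t powr p
      + \<mu> * (exp t powr (m + 2) * f (exp t)) = 0"
    using v unfolding profile_solution_def by blast
  define u where "u = (\<lambda>r. r powr (- m) * v (ln r))"
  define u' where "u' = (\<lambda>r. r powr (- m - 1) * (v' (ln r) + - m * v (ln r)))"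
  define u'' where "u'' = (\<lambda>r. r powr (- m - 1 - 1) *
      (v'' (ln r) + - m * v' (ln r) + (- m - 1) * (v' (ln r) + - m * v (ln r))))"
  have u_deriv: "(u has_real_derivative u' r) (at r)" if "r > 0" for r
    unfolding u_def u'_def by (rule has_real_derivative_powr_mult_comp_ln[OF that v'])
  have "((\<lambda>t. v' t + - m * v t) has_real_derivative v'' t + - m * v' t) (at t)" for t
    by (auto intro!: derivative_eq_intros v' v''_deriv)
  then have u'_deriv: "(u' has_real_derivative u'' r) (at r)" if "r > 0" for r
    unfolding u'_def u''_def by (rule has_real_derivative_powr_mult_comp_ln[OF that])
  have "continuous_on UNIV v" "continuous_on UNIV v'"
    using v' v''_deriv by (auto intro: has_real_derivative_imp_continuous_on)
  moreover have "continuous_on {0<..} (\<lambda>r. \<phi> (ln r))"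
    if "continuous_on UNIV \<phi>" for \<phi> :: "real \<Rightarrow> real"
    by (rule continuous_on_compose2[OF that]) (auto intro!: continuous_intros)
  ultimately have u''_cont: "continuous_on {0<..} u''"
    unfolding u''_def using v'' by (intro continuous_intros) auto
  have v_pos: "v t > 0" for t
    using v_ge(1) v_ge(2)[of t] by linarith
  have u_ode: "u'' r + (real N - 1) / r * u' r + r powr \<alpha> * u r powr p + \<mu> * f r = 0"
    if r: "r > 0" for r
    using emden_fowler_identity[OF r v_pos m(2), where V' = "v' (ln r)" and V'' = "v'' (ln r)"
        and N = N and \<mu> = \<mu> and F = "f r"] ode[of "ln r"] r
    by (simp add: u_def u'_def u''_def)
  have u_lower: "\<delta> * r powr (- m) \<le> u r" if "r > 0" for r
    using mult_right_mono[OF v_ge(2)[of "ln r"], of "r powr (- m)"] by (simp add: u_def mult.commute)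
  show ?thesis
    unfolding singular_solution_def u_def[symmetric]
    using u_deriv u'_deriv u''_cont u_ode u_lower v_ge(1) mult_pos_pos[OF _ v_pos]
      filterlim_at_right_0_of_powr_lower_bound[OF m(1) v_ge(1) u_lower]
    by (intro conjI exI[of _ u'] exI[of _ u'']) (auto simp: u_def)
qed

lemma emden_fowler_singular_slow_decay:
  fixes N :: nat and \<alpha> p m \<mu> \<delta> :: real and f v :: "real \<Rightarrow> real"
  assumes N: "N \<ge> 2" and m: "m > 0" "m < real N - 2" "m * (p - 1) = 2 + \<alpha>"
    and v_ge: "\<delta> > 0" "\<And>t. v t \<ge> \<delta>" and f: "continuous_on {0<..} f"
    and v: "profile_solution (real N - 2 - 2 * m) (m * (real N - 2 - m)) p
      (\<lambda>t. \<mu> * (exp t powr (m + 2) * f (exp t))) v"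
  shows "singular_solution N \<alpha> p \<mu> f (\<lambda>r. r powr (- m) * v (ln r))"
    and "slow_decay N (\<lambda>r. r powr (- m) * v (ln r))"
proof -
  show "singular_solution N \<alpha> p \<mu> f (\<lambda>r. r powr (- m) * v (ln r))"
    by (rule emden_fowler_singular_solution[OF m(1,3) v_ge f v])
  have "\<delta> * r powr (- m) \<le> r powr (- m) * v (ln r)" for r
    using mult_right_mono[OF v_ge(2)[of "ln r"], of "r powr (- m)"]
    by (simp add: mult.commute)
  then show "slow_decay N (\<lambda>r. r powr (- m) * v (ln r))"
    by (intro slow_decay_of_lower_bound[where m = m, OF N m(2) v_ge(1)])
qed

section \<open>The exponents and the forcing term\<close>

lemma bounded_on_pos_reals:
  fixes F :: "real \<Rightarrow> real"
  assumes cont: "continuous_on {0<..} F"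
    and zero: "\<forall>\<^sub>F r in at_right 0. \<bar>F r\<bar> \<le> C0" and infinity: "\<forall>\<^sub>F r in at_top. \<bar>F r\<bar> \<le> C1"
  obtains B where "\<And>r. r > 0 \<Longrightarrow> \<bar>F r\<bar> \<le> B"
proof -
  obtain a where a: "a > 0" "\<And>r. r > 0 \<Longrightarrow> r < a \<Longrightarrow> \<bar>F r\<bar> \<le> C0"
    using zero unfolding eventually_at_right_field by auto
  obtain K where K: "\<And>r. r \<ge> K \<Longrightarrow> \<bar>F r\<bar> \<le> C1"
    using infinity unfolding eventually_at_top_linorder by auto
  have "continuous_on {a..max K a} (\<lambda>r. \<bar>F r\<bar>)"
    using a by (intro continuous_intros continuous_on_subset[OF cont]) auto
  moreover have "{a..max K a} \<noteq> {}"
    by simp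
  ultimately obtain r0 where r0: "\<And>r. r \<in> {a..max K a} \<Longrightarrow> \<bar>F r\<bar> \<le> \<bar>F r0\<bar>"
    using continuous_attains_sup[OF compact_Icc] by blast
  have "\<bar>F r\<bar> \<le> max \<bar>F r0\<bar> (max C0 C1)" if "r > 0" for r
  proof (cases "r < a")
    case True
    then show ?thesis
      using a(2)[OF that] by simp
  next
    case False
    have "r \<le> max K a \<or> K \<le> r"
      by (auto simp: le_max_iff_disj)
    then show ?thesis
      using r0[of r] K[of r] False by auto
  qed
  with that show ?thesis
    by blast
qed

lemma bounded_powr_mult_of_bigo:
  fixes f :: "real \<Rightarrow> real" and e \<nu> q :: real
  assumes cont: "continuous_on {0<..} f"
    and zero: "f \<in> O[at_right 0](\<lambda>r. r powr \<nu>)" and infinity: "f \<in> O[at_top](\<lambda>r. r powr (- q))"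
    and e: "\<nu> + e \<ge> 0" "e \<le> q"
  obtains G where "\<And>r. r > 0 \<Longrightarrow> \<bar>r powr e * f r\<bar> \<le> G"
proof -
  obtain C0 where "\<forall>\<^sub>F r in at_right 0. norm (f r) \<le> C0 * norm (r powr \<nu>)"
    using zero by (elim landau_o.bigE) auto
  moreover have "\<forall>\<^sub>F r in at_right 0. 0 < r \<and> r < (1 :: real)"
    by (intro eventually_conj eventually_at_right_less)
      (auto simp: eventually_at_right_field intro!: exI[of _ 1])
  ultimately have bound_zero: "\<forall>\<^sub>F r in at_right 0. \<bar>r powr e * f r\<bar> \<le> \<bar>C0\<bar>"
  proof eventually_elim
    case (elim r)
    then have "\<bar>r powr e * f r\<bar> \<le> r powr e * (C0 * r powr \<nu>)"
      by (simp add: abs_mult mult_left_mono)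
    also have "\<dots> = C0 * r powr (\<nu> + e)"
      by (simp add: powr_add)
    also have "\<dots> \<le> \<bar>C0\<bar> * 1"
      using elim e(1) by (intro mult_mono powr_le1) auto
    finally show ?case
      by simp
  qed
  obtain C1 where "\<forall>\<^sub>F r in at_top. norm (f r) \<le> C1 * norm (r powr (- q))"
    using infinity by (elim landau_o.bigE) auto
  moreover have "\<forall>\<^sub>F r in at_top. (1 :: real) \<le> r"
    by (rule eventually_ge_at_top)
  ultimately have bound_infinity: "\<forall>\<^sub>F r in at_top. \<bar>r powr e * f r\<bar> \<le> \<bar>C1\<bar>"
  proof eventually_elim
    case (elim r)
    then have "\<bar>r powr e * f r\<bar> \<le> r powr e * (C1 * r powr (- q))"
      by (simp add: abs_mult mult_left_mono)
    also have "\<dots> = C1 * r powr (e - q)"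
      by (simp add: powr_diff powr_minus divide_inverse)
    also have "\<dots> \<le> \<bar>C1\<bar> * r powr 0"
      using elim e(2) by (intro mult_mono powr_mono) auto
    finally show ?case
      using elim by simp
  qed
  have "continuous_on {0<..} (\<lambda>r. r powr e * f r)"
    by (intro continuous_intros cont) auto
  from bounded_on_pos_reals[OF this bound_zero bound_infinity] that show ?thesis
    by blast
qed

lemma admissible_forcing_bounded:
  fixes f :: "real \<Rightarrow> real" and m :: real
  assumes f: "admissible_f N f" and m: "0 \<le> m" "m + 2 \<le> real N"
  obtains G where "continuous_on UNIV (\<lambda>t. exp t powr (m + 2) * f (exp t))"
    and "\<And>t. \<bar>exp t powr (m + 2) * f (exp t)\<bar> \<le> G"
proof -
  obtain \<nu> q where f_cont: "continuous_on {0<..} f" and "\<nu> > -2" "q > real N"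
    and f_zero: "f \<in> O[at_right 0](\<lambda>r. r powr \<nu>)" and f_infinity: "f \<in> O[at_top](\<lambda>r. r powr (- q))"
    using f unfolding admissible_f_def by blast
  then have "\<nu> + (m + 2) \<ge> 0" "m + 2 \<le> q"
    using m by linarith+
  from bounded_powr_mult_of_bigo[OF f_cont f_zero f_infinity this]
  obtain G where G: "\<And>r. r > 0 \<Longrightarrow> \<bar>r powr (m + 2) * f r\<bar> \<le> G"
    by blast
  show ?thesis
  proof (rule that)
    have "continuous_on UNIV (\<lambda>t. f (exp t))"
      by (rule continuous_on_compose2[OF f_cont]) (auto intro!: continuous_intros)
    then show "continuous_on UNIV (\<lambda>t. exp t powr (m + 2) * f (exp t))"
      by (intro continuous_intros) auto
    show "\<bar>exp t powr (m + 2) * f (exp t)\<bar> \<le> G" for t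
      using G[of "exp t"] by simp
  qed
qed

lemma supercritical_exponent:
  fixes N :: nat and \<alpha> p :: real
  assumes "N \<ge> 3" and "\<alpha> > -2" and "p > p_S N \<alpha>"
  shows "p > 1" and "(2 + \<alpha>) / (p - 1) > 0" and "2 * ((2 + \<alpha>) / (p - 1)) < real N - 2"
proof -
  have p: "(real N + 2 + 2 * \<alpha>) < p * (real N - 2)"
    using assms(1,3) by (simp add: p_S_def pos_divide_less_eq)
  then have "real N - 2 < p * (real N - 2)"
    using assms(2) by linarith
  then show p1: "p > 1"
    using assms(1) by (simp add: mult_less_cancel_right1)
  then show "(2 + \<alpha>) / (p - 1) > 0"
    using assms(2) by simp
  have "2 * (2 + \<alpha>) < (real N - 2) * (p - 1)"
    using p by (simp add: algebra_simps)
  then show "2 * ((2 + \<alpha>) / (p - 1)) < real N - 2"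
    using p1 by (simp add: field_simps)
qed

theorem corollary1p7:
  fixes N :: nat and \<alpha> p :: real and f :: "real \<Rightarrow> real"
  assumes "N \<ge> 3" and "\<alpha> > -2" and "p > p_S N \<alpha>" and "admissible_f N f"
  shows "\<exists>\<mu>\<^sub>1>0. \<forall>\<mu>. 0 \<le> \<mu> \<and> \<mu> < \<mu>\<^sub>1 \<longrightarrow>
           (\<exists>u. singular_solution N \<alpha> p \<mu> f u \<and> slow_decay N u)"
proof -
  define m where "m = (2 + \<alpha>) / (p - 1)"
  define k where "k = m * (real N - 2 - m)"
  have p: "p > 1" and m: "m > 0" "2 * m < real N - 2"
    using supercritical_exponent[OF assms(1-3)] by (simp_all add: m_def)
  have mp: "m * (p - 1) = 2 + \<alpha>"
    using p by (simp add: m_def)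
  have c: "real N - 2 - 2 * m > 0" and k: "k > 0"
    using m by (simp_all add: k_def)
  have A: "k powr (1 / (p - 1)) > 0" "(k powr (1 / (p - 1))) powr (p - 1) = k"
    using k p by (simp_all add: powr_powr)
  have "0 \<le> m" "m + 2 \<le> real N"
    using m by linarith+
  from admissible_forcing_bounded[OF assms(4) this]
  obtain G where g: "continuous_on UNIV (\<lambda>t. exp t powr (m + 2) * f (exp t))"
    "\<And>t. \<bar>exp t powr (m + 2) * f (exp t)\<bar> \<le> G"
    by blast
  from profile_equation_positive_solution[OF c k p A g]
  obtain \<mu>\<^sub>1 where "\<mu>\<^sub>1 > 0" and profile: "\<And>\<mu>. 0 \<le> \<mu> \<Longrightarrow> \<mu> < \<mu>\<^sub>1 \<Longrightarrow> \<exists>v \<delta>. \<delta> > 0 \<and> (\<forall>t. v t \<ge> \<delta>) \<and>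
      profile_solution (real N - 2 - 2 * m) k p (\<lambda>t. \<mu> * (exp t powr (m + 2) * f (exp t))) v"
    by blast
  have N: "N \<ge> 2" "m < real N - 2" and f: "continuous_on {0<..} f"
    using assms(1,4) m by (auto simp: admissible_f_def)
  have "\<exists>u. singular_solution N \<alpha> p \<mu> f u \<and> slow_decay N u" if "0 \<le> \<mu>" "\<mu> < \<mu>\<^sub>1" for \<mu>
  proof -
    from profile[OF that] obtain v \<delta> where "\<delta> > 0" "\<forall>t. v t \<ge> \<delta>"
      and "profile_solution (real N - 2 - 2 * m) k p (\<lambda>t. \<mu> * (exp t powr (m + 2) * f (exp t))) v"
      by blast
    from emden_fowler_singular_slow_decay[OF N(1) m(1) N(2) mp this(1) spec[OF this(2)] f
        this(3)[unfolded k_def]]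
    show ?thesis
      by blast
  qed
  with \<open>\<mu>\<^sub>1 > 0\<close> show ?thesis
    by blast
qed

end
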